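(* Let $k\ne\mathbb{F}_2$ be a field, $p=\operatorname{char}(k)$, and let $f\in k[x_1,\dots,x_n]_d$ with $d\ge3$. Suppose that in some basis $x_1,\dots,x_n$ the following hold: (1) $\Xi(\partial f/\partial x_i)\ne\varnothing$ for all $1\le i\le n$; (2) $\Xi(\partial f/\partial x_i)\cap\Xi(\partial f/\partial x_j)=\varnothing$ for all $1\le i<j\le n$; (3) $\Xi(f)$ equals the set of exponent vectors $(d_1,\dots,d_n)$ with $\sum d_i=d$ such that $p\nmid d_i$ for some $i$ and $\Xi\bigl(\partial(x_1^{d_1}\cdots x_n^{d_n})/\partial x_i\bigr)\subset\bigcup_{j=1}^n\Xi(\partial f/\partial x_j)$ for all $1\le i\le n$; (4) the graph with vertex set $\{1,\dots,n\}$ and edges $\{(ij)\mid\partial^2f/\partial x_i\partial x_j\ne0\}$ is connected. Then $f$ is not a direct sum.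
   Context: For a nonzero form $h$ in the basis $x_1,\dots,x_n$, the state $\Xi(h)$ is the set of exponent vectors $(d_1,\dots,d_n)$ of monomials $x_1^{d_1}\cdots x_n^{d_n}$ appearing in $h$ with nonzero coefficient; $\Xi(0)=\varnothing$. (For $p=0$, "$p\nmid d_i$" means $d_i\ne0$.) A form $f$ is a direct sum if, after a linear change of variables, $f=f_1(x_1,\dots,x_a)+f_2(x_{a+1},\dots,x_n)$ with $1\le a\le n-1$ and $f_1,f_2\ne0$. *)

theory Defs
  imports "HOL-Library.Poly_Mapping"
begin

text \<open>Polynomials in the variables x_0, x_1, ... over a field: finitely supported maps
  from exponent vectors exponent vectors to coefficients.\<close>

type_synonym 'k mpoly = "(nat \<Rightarrow>\<^sub>0 nat) \<Rightarrow>\<^sub>0 'k"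

definition state :: "'k::zero mpoly \<Rightarrow> (nat \<Rightarrow>\<^sub>0 nat) set" where
  "state h = Poly_Mapping.keys h"

definition mono :: "(nat \<Rightarrow>\<^sub>0 nat) \<Rightarrow> 'k::{zero,one} mpoly" where
  "mono \<alpha> = Poly_Mapping.single \<alpha> 1"

definition var :: "nat \<Rightarrow> 'k::{zero,one} mpoly" where
  "var i = mono (Poly_Mapping.single i 1)"

definition const :: "'k::zero \<Rightarrow> 'k mpoly" where
  "const c = Poly_Mapping.single 0 c"

definition pd :: "nat \<Rightarrow> 'k::comm_ring_1 mpoly \<Rightarrow> 'k mpoly" where
  "pd i f = (\<Sum>\<alpha>\<in>Poly_Mapping.keys f. Poly_Mapping.single (\<alpha> - Poly_Mapping.single i 1)
                               (of_nat (Poly_Mapping.lookup \<alpha> i) * Poly_Mapping.lookup f \<alpha>))"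

definition is_form :: "nat \<Rightarrow> nat \<Rightarrow> 'k::zero mpoly \<Rightarrow> bool" where
  "is_form n d f \<longleftrightarrow> (\<forall>\<alpha>\<in>Poly_Mapping.keys f. Poly_Mapping.keys \<alpha> \<subseteq> {..<n} \<and> (\<Sum>i<n. Poly_Mapping.lookup \<alpha> i) = d)"

definition in_vars :: "nat set \<Rightarrow> 'k::zero mpoly \<Rightarrow> bool" where
  "in_vars V f \<longleftrightarrow> (\<forall>\<alpha>\<in>Poly_Mapping.keys f. Poly_Mapping.keys \<alpha> \<subseteq> V)"

definition lin_subst :: "nat \<Rightarrow> (nat \<Rightarrow> nat \<Rightarrow> 'k::comm_ring_1) \<Rightarrow> 'k mpoly \<Rightarrow> 'k mpoly" where
  "lin_subst n A f = (\<Sum>\<alpha>\<in>Poly_Mapping.keys f. const (Poly_Mapping.lookup f \<alpha>) *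
       (\<Prod>i<n. (\<Sum>j<n. const (A i j) * var j) ^ Poly_Mapping.lookup \<alpha> i))"

definition invertible_mat :: "nat \<Rightarrow> (nat \<Rightarrow> nat \<Rightarrow> 'k::comm_ring_1) \<Rightarrow> bool" where
  "invertible_mat n A \<longleftrightarrow> (\<exists>B. \<forall>i<n. \<forall>j<n.
      (\<Sum>l<n. A i l * B l j) = (if i = j then 1 else 0) \<and>
      (\<Sum>l<n. B i l * A l j) = (if i = j then 1 else 0))"

definition direct_sum :: "nat \<Rightarrow> 'k::comm_ring_1 mpoly \<Rightarrow> bool" where
  "direct_sum n f \<longleftrightarrow> (\<exists>A a f1 f2. invertible_mat n A \<and> 1 \<le> a \<and> a \<le> n - 1 \<and>
      f1 \<noteq> 0 \<and> f2 \<noteq> 0 \<and> in_vars {..<a} f1 \<and> in_vars {a..<n} f2 \<and>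
      lin_subst n A f = f1 + f2)"

definition hessian_graph_connected :: "nat \<Rightarrow> 'k::comm_ring_1 mpoly \<Rightarrow> bool" where
  "hessian_graph_connected n f \<longleftrightarrow>
     (\<forall>i<n. \<forall>j<n. (i, j) \<in> {(u, v). u < n \<and> v < n \<and> pd u (pd v f) \<noteq> 0}\<^sup>*)"

end

(* Suppose the substitution x \<mapsto> A x splits f as f1 + f2, with f1 in the first a variables and
   f2 in the others, and let B be the inverse of A.  Pulling f1 back, F = f1(B x) satisfies, by the
   chain rule, dF/dx_j = \<Sum>_m P_mj df/dx_m with P = A E_a B, where E_a projects onto the first a
   coordinates.  Every exponent of dF/dx_j therefore comes from some \<Xi>(df/dx_m); raising it by
   x_j gives a monomial which condition (3) puts into \<Xi>(f), so \<Xi>(dF/dx_j) \<subseteq> \<Xi>(df/dx_j).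
   Conditions (1) and (2) then force P to be diagonal, dF/dx_j = P_jj df/dx_j, and comparing the
   two orders of differentiation of F gives P_ii = P_jj whenever d^2 f/dx_i dx_j \<noteq> 0.  By (4)
   P is a scalar matrix, but B P A = E_a is not, as 0 < a < n. *)

theory Submission
  imports Defs
begin

(* The simplifier rewrites (1::nat) to Suc 0, so a simp rule mentioning unit_exp never fires;
   such facts are passed instantiated via using instead. *)
abbreviation unit_exp :: "nat \<Rightarrow> (nat \<Rightarrow>\<^sub>0 nat)" where
  "unit_exp k \<equiv> Poly_Mapping.single k 1"

lemma minus_unit_exp_add: "0 < Poly_Mapping.lookup \<alpha> j \<Longrightarrow> (\<alpha> - unit_exp j) + unit_exp j = \<alpha>"
  by (rule poly_mapping_eqI) (auto simp: lookup_add lookup_minus lookup_single when_def)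

lemma minus_unit_exp_eq_iff:
  "0 < Poly_Mapping.lookup \<alpha> j \<Longrightarrow> \<alpha> - unit_exp j = \<beta> \<longleftrightarrow> \<alpha> = \<beta> + unit_exp j"
  using minus_unit_exp_add[of \<alpha> j] by auto

lemma when_minus_unit_exp_eq:
  "(of_nat (Poly_Mapping.lookup \<alpha> j) * c when \<alpha> - unit_exp j = \<beta>) =
     (of_nat (Poly_Mapping.lookup \<alpha> j) * c when \<alpha> = \<beta> + unit_exp j)"
  using minus_unit_exp_eq_iff[of \<alpha> j \<beta>]
  by (cases "Poly_Mapping.lookup \<alpha> j = 0") (auto simp: when_def lookup_add)

lemma minus_unit_exp_add_commute:
  "0 < Poly_Mapping.lookup \<alpha> j \<Longrightarrow> \<alpha> - unit_exp j + \<beta> = \<alpha> + \<beta> - unit_exp j"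
  by (rule poly_mapping_eqI) (auto simp: lookup_add lookup_minus lookup_single when_def)

lemma keys_subset_keys_add: "Poly_Mapping.keys (\<beta> :: nat \<Rightarrow>\<^sub>0 nat) \<subseteq> Poly_Mapping.keys (\<beta> + \<gamma>)"
  by (auto simp: in_keys_iff lookup_add)

lemma sum_lookup_add_unit_exp:
  "m < n \<Longrightarrow> (\<Sum>i<n. Poly_Mapping.lookup (\<beta> + unit_exp m) i) = (\<Sum>i<n. Poly_Mapping.lookup \<beta> i) + 1"
  by (simp add: lookup_add sum.distrib lookup_single when_def sum.delta)

lemma update_eq_add_single:
  "a \<notin> Poly_Mapping.keys f \<Longrightarrow> Poly_Mapping.update a b f = f + Poly_Mapping.single a b"
  by (rule poly_mapping_eqI)
     (auto simp: lookup_update lookup_add lookup_single when_def in_keys_iff)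

lemma exp_induct [case_names zero add_unit]:
  assumes "P 0" and add_unit: "\<And>\<alpha> k. P \<alpha> \<Longrightarrow> P (\<alpha> + unit_exp k)"
  shows "P (\<alpha> :: nat \<Rightarrow>\<^sub>0 nat)"
proof (induction \<alpha> rule: update_induct)
  case const
  show ?case by fact
next
  case (update \<alpha> k m)
  have "P (\<alpha> + Poly_Mapping.single k l)" for l
  proof (induction l)
    case (Suc l)
    have "\<alpha> + Poly_Mapping.single k (Suc l) = (\<alpha> + Poly_Mapping.single k l) + unit_exp k"
      by (simp add: add.assoc flip: single_add)
    with add_unit[OF Suc] show ?case by simp
  qed (simp add: update.IH)
  then show ?case
    by (simp add: update_eq_add_single update.hyps)
qed

lemma mpoly_induct [case_names zero single add]:
  assumes "P 0" and "\<And>\<alpha> c. P (Poly_Mapping.single \<alpha> c)"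
    and "\<And>g h. P g \<Longrightarrow> P h \<Longrightarrow> P (g + h)"
  shows "P f"
proof (induction f rule: update_induct)
  case const
  show ?case by fact
next
  case (update f \<alpha> c)
  then show ?case
    using assms(2,3) by (simp add: update_eq_add_single)
qed

lemma sum_single_lookup_keys:
  "(\<Sum>\<alpha>\<in>Poly_Mapping.keys g. Poly_Mapping.single \<alpha> (Poly_Mapping.lookup g \<alpha>)) = g"
  by (rule poly_mapping_eqI) (simp add: lookup_sum lookup_single when_def sum.delta in_keys_iff)

lemma const_mult_eq_map: "const c * g = Poly_Mapping.map ((*) c) g"
  by (simp add: const_def mult_map_scale_conv_mult)

lemma lookup_const_mult: "Poly_Mapping.lookup (const c * g) \<alpha> = c * Poly_Mapping.lookup g \<alpha>"
  by (simp add: const_mult_eq_map Poly_Mapping.map.rep_eq when_def)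

lemma const_mult_single: "const c * Poly_Mapping.single \<alpha> a = Poly_Mapping.single \<alpha> (c * a)"
  by (simp add: const_def mult_single)

lemma const_0 [simp]: "const 0 = 0"
  by (simp add: const_def)

lemma const_1 [simp]: "const 1 = 1"
  by (simp add: const_def)

lemma const_add: "const (a + b) = const a + const b"
  by (simp add: const_def single_add)

lemma const_mult: "const (a * b) = const a * const b"
  by (simp add: const_def mult_single)

lemma const_sum: "const (\<Sum>i\<in>I. c i) = (\<Sum>i\<in>I. const (c i))"
  by (induction I rule: infinite_finite_induct) (simp_all add: const_add)

lemma state_sum_const_mult_subset:
  "state (\<Sum>m\<in>M. const (c m) * g m) \<subseteq> (\<Union>m\<in>M. state (g m))"
proof
  fix \<beta>
  assume "\<beta> \<in> state (\<Sum>m\<in>M. const (c m) * g m)"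
  then have "(\<Sum>m\<in>M. c m * Poly_Mapping.lookup (g m) \<beta>) \<noteq> 0"
    by (simp add: state_def in_keys_iff lookup_sum lookup_const_mult)
  then obtain m where "m \<in> M" "Poly_Mapping.lookup (g m) \<beta> \<noteq> 0"
    by (metis (mono_tags, lifting) mult_zero_right sum.neutral)
  then show "\<beta> \<in> (\<Union>m\<in>M. state (g m))"
    by (auto simp: state_def in_keys_iff)
qed

section \<open>Formal partial derivatives\<close>

lemma lookup_pd:
  "Poly_Mapping.lookup (pd j h) \<beta> =
     of_nat (Poly_Mapping.lookup \<beta> j + 1) * Poly_Mapping.lookup h (\<beta> + unit_exp j)"
proof -
  have "Poly_Mapping.lookup (pd j h) \<beta> = (\<Sum>\<alpha>\<in>Poly_Mapping.keys h.
      of_nat (Poly_Mapping.lookup \<alpha> j) * Poly_Mapping.lookup h \<alpha> when \<alpha> = \<beta> + unit_exp j)"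
    unfolding pd_def lookup_sum lookup_single when_minus_unit_exp_eq ..
  also have "\<dots> = of_nat (Poly_Mapping.lookup \<beta> j + 1) * Poly_Mapping.lookup h (\<beta> + unit_exp j)"
    by (auto simp: when_def sum.delta lookup_add in_keys_iff)
  finally show ?thesis .
qed

lemma in_state_pd_iff: "\<beta> \<in> state (pd j h) \<longleftrightarrow>
   of_nat (Poly_Mapping.lookup \<beta> j + 1) * Poly_Mapping.lookup h (\<beta> + unit_exp j) \<noteq> 0"
  by (simp add: state_def in_keys_iff lookup_pd)

lemma pd_zero [simp]: "pd j 0 = 0"
  by (simp add: pd_def)

lemma pd_add: "pd j (g + h) = pd j g + pd j h"
  by (rule poly_mapping_eqI) (simp add: lookup_pd lookup_add algebra_simps)

lemma pd_const_mult: "pd j (const c * g) = const c * pd j g"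
  by (rule poly_mapping_eqI) (simp add: lookup_pd lookup_const_mult mult.left_commute)

lemma pd_sum: "pd j (\<Sum>i\<in>I. g i) = (\<Sum>i\<in>I. pd j (g i))"
  by (induction I rule: infinite_finite_induct) (auto simp: pd_add)

lemma pd_single:
  "pd j (Poly_Mapping.single \<alpha> c) =
     Poly_Mapping.single (\<alpha> - unit_exp j) (of_nat (Poly_Mapping.lookup \<alpha> j) * c)"
  (is "_ = ?rhs")
proof (rule poly_mapping_eqI)
  fix \<beta>
  have "Poly_Mapping.lookup ?rhs \<beta> =
      (of_nat (Poly_Mapping.lookup \<alpha> j) * c when \<alpha> = \<beta> + unit_exp j)"
    unfolding lookup_single when_minus_unit_exp_eq ..
  then show "Poly_Mapping.lookup (pd j (Poly_Mapping.single \<alpha> c)) \<beta> = Poly_Mapping.lookup ?rhs \<beta>"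
    by (auto simp: lookup_pd lookup_single lookup_add when_def)
qed

lemma pd_var: "pd i (var k :: 'k::comm_ring_1 mpoly) = (if i = k then 1 else 0)"
  by (auto simp: var_def mono_def pd_single lookup_single when_def simp flip: single_one)

lemma pd_one [simp]: "pd i 1 = 0"
  by (simp add: pd_single flip: single_one)

lemma pd_mult_single:
  "pd j (Poly_Mapping.single \<alpha> a * Poly_Mapping.single \<beta> b) =
     pd j (Poly_Mapping.single \<alpha> a) * Poly_Mapping.single \<beta> b +
     Poly_Mapping.single \<alpha> a * pd j (Poly_Mapping.single \<beta> b)"
proof -
  have shift: "Poly_Mapping.single (\<gamma> - unit_exp j + \<delta>) (of_nat (Poly_Mapping.lookup \<gamma> j) * c) =
      Poly_Mapping.single (\<gamma> + \<delta> - unit_exp j) (of_nat (Poly_Mapping.lookup \<gamma> j) * c)"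
    for \<gamma> \<delta> and c :: 'a
    by (cases "Poly_Mapping.lookup \<gamma> j = 0") (use minus_unit_exp_add_commute[of \<gamma> j \<delta>] in simp_all)
  have "pd j (Poly_Mapping.single \<alpha> a * Poly_Mapping.single \<beta> b) =
      Poly_Mapping.single (\<alpha> + \<beta> - unit_exp j) (of_nat (Poly_Mapping.lookup \<alpha> j) * (a * b)) +
      Poly_Mapping.single (\<alpha> + \<beta> - unit_exp j) (of_nat (Poly_Mapping.lookup \<beta> j) * (a * b))"
    by (simp add: mult_single pd_single lookup_add distrib_right flip: single_add)
  also have "\<dots> = pd j (Poly_Mapping.single \<alpha> a) * Poly_Mapping.single \<beta> b +
      Poly_Mapping.single \<alpha> a * pd j (Poly_Mapping.single \<beta> b)"
    using shift[of \<alpha> \<beta> "a * b"] shift[of \<beta> \<alpha> "a * b"]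
    by (simp add: pd_single mult_single ac_simps)
  finally show ?thesis .
qed

lemma pd_mult: "pd j (g * h) = pd j g * h + g * pd j h"
proof (induction g rule: mpoly_induct)
  case (single \<alpha> a)
  show ?case
    by (induction h rule: mpoly_induct)
       (simp_all add: pd_mult_single pd_add algebra_simps)
qed (simp_all add: pd_add algebra_simps)

lemma pd_commute: "pd i (pd j h) = pd j (pd i h)"
proof (cases "i = j")
  case False
  then show ?thesis
    by (intro poly_mapping_eqI) (simp add: lookup_pd lookup_add lookup_single add_ac mult_ac)
qed simp

lemma pd_eq_0_if_in_vars:
  assumes "in_vars V g" "i \<notin> V"
  shows "pd i g = 0"
proof (rule poly_mapping_eqI)
  fix \<beta>
  have "i \<in> Poly_Mapping.keys (\<beta> + unit_exp i)"
    by (simp add: in_keys_iff lookup_add)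
  with assms have "\<beta> + unit_exp i \<notin> Poly_Mapping.keys g"
    by (auto simp: in_vars_def)
  then show "Poly_Mapping.lookup (pd i g) \<beta> = Poly_Mapping.lookup 0 \<beta>"
    by (simp add: lookup_pd in_keys_iff)
qed

lemma in_vars_pd:
  assumes "in_vars V g"
  shows "in_vars V (pd j g)"
  unfolding in_vars_def
proof
  fix \<beta>
  assume "\<beta> \<in> Poly_Mapping.keys (pd j g)"
  then have "\<beta> + unit_exp j \<in> Poly_Mapping.keys g"
    by (auto simp: in_keys_iff lookup_pd)
  with assms show "Poly_Mapping.keys \<beta> \<subseteq> V"
    using keys_subset_keys_add[of \<beta> "unit_exp j"] by (auto simp: in_vars_def)
qed

section \<open>Linear changes of variables\<close>

definition subst_var :: "nat \<Rightarrow> (nat \<Rightarrow> nat \<Rightarrow> 'k::comm_ring_1) \<Rightarrow> nat \<Rightarrow> 'k mpoly" where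
  "subst_var n A i = (\<Sum>j<n. const (A i j) * var j)"

definition subst_mono :: "nat \<Rightarrow> (nat \<Rightarrow> nat \<Rightarrow> 'k::comm_ring_1) \<Rightarrow> (nat \<Rightarrow>\<^sub>0 nat) \<Rightarrow> 'k mpoly" where
  "subst_mono n A \<alpha> = (\<Prod>i<n. subst_var n A i ^ Poly_Mapping.lookup \<alpha> i)"

lemma lin_subst_eq_sum_superset:
  assumes "finite K" "Poly_Mapping.keys g \<subseteq> K"
  shows "lin_subst n A g = (\<Sum>\<alpha>\<in>K. const (Poly_Mapping.lookup g \<alpha>) * subst_mono n A \<alpha>)"
  unfolding lin_subst_def subst_mono_def subst_var_def
  using assms by (intro sum.mono_neutral_left) (auto simp: in_keys_iff)

lemma lin_subst_zero [simp]: "lin_subst n A 0 = 0"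
  by (simp add: lin_subst_def)

lemma lin_subst_add: "lin_subst n A (g + h) = lin_subst n A g + lin_subst n A h"
proof -
  let ?K = "Poly_Mapping.keys g \<union> Poly_Mapping.keys h"
  have "finite ?K" "Poly_Mapping.keys (g + h) \<subseteq> ?K"
    by (simp_all add: keys_add)
  then show ?thesis
    by (simp add: lin_subst_eq_sum_superset[of ?K] lookup_add const_add distrib_right sum.distrib)
qed

lemma lin_subst_single: "lin_subst n A (Poly_Mapping.single \<alpha> c) = const c * subst_mono n A \<alpha>"
  by (simp add: lin_subst_eq_sum_superset[of "{\<alpha>}"])

lemma lin_subst_const_mult: "lin_subst n A (const c * g) = const c * lin_subst n A g"
  by (induction g rule: mpoly_induct)
     (simp_all add: const_mult_single lin_subst_single const_mult lin_subst_add
       distrib_left mult.assoc)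

lemma lin_subst_sum: "lin_subst n A (\<Sum>i\<in>I. g i) = (\<Sum>i\<in>I. lin_subst n A (g i))"
  by (induction I rule: infinite_finite_induct) (auto simp: lin_subst_add)

lemma subst_mono_zero [simp]: "subst_mono n A 0 = 1"
  by (simp add: subst_mono_def)

lemma subst_mono_add: "subst_mono n A (\<alpha> + \<beta>) = subst_mono n A \<alpha> * subst_mono n A \<beta>"
  by (simp add: subst_mono_def lookup_add power_add prod.distrib)

lemma lin_subst_mult: "lin_subst n A (g * h) = lin_subst n A g * lin_subst n A h"
proof (induction g rule: mpoly_induct)
  case (single \<alpha> a)
  show ?case
  proof (induction h rule: mpoly_induct)
    case (single \<beta> b)
    show ?case
      by (simp add: mult_single lin_subst_single subst_mono_add const_mult ac_simps)
  qed (simp_all add: distrib_left lin_subst_add)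
qed (simp_all add: distrib_right lin_subst_add)

lemma lin_subst_one [simp]: "lin_subst n A 1 = 1"
  by (simp add: lin_subst_single mult_single flip: single_one)

lemma lin_subst_power: "lin_subst n A (g ^ k) = lin_subst n A g ^ k"
  by (induction k) (simp_all add: lin_subst_mult)

lemma lin_subst_prod: "lin_subst n A (\<Prod>i\<in>I. g i) = (\<Prod>i\<in>I. lin_subst n A (g i))"
  by (induction I rule: infinite_finite_induct) (auto simp: lin_subst_mult)

lemma lin_subst_var: "lin_subst n A (var k) = (if k < n then subst_var n A k else 1)"
proof -
  have "subst_mono n A (unit_exp k) = (\<Prod>i<n. if k = i then subst_var n A i else 1)"
    unfolding subst_mono_def by (intro prod.cong) (auto simp: lookup_single when_def)
  then show ?thesis
    by (simp add: var_def mono_def lin_subst_single prod.delta)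
qed

lemma pd_subst_var: "j < n \<Longrightarrow> pd j (subst_var n A k) = const (A k j)"
  by (simp add: subst_var_def pd_sum pd_const_mult pd_var if_distrib cong: if_cong)

lemma pd_lin_subst_var:
  assumes "j < n"
  shows "pd j (lin_subst n A (var k)) = (\<Sum>i<n. const (A i j) * lin_subst n A (pd i (var k)))"
proof (cases "k < n")
  case True
  have "(\<Sum>i<n. const (A i j) * lin_subst n A (pd i (var k))) =
      (\<Sum>i<n. if i = k then const (A k j) else 0)"
    by (intro sum.cong) (auto simp: pd_var)
  with True assms show ?thesis
    by (simp add: lin_subst_var pd_subst_var)
qed (simp add: lin_subst_var pd_var)

lemma pd_lin_subst_mono:
  assumes "j < n"
  shows "pd j (lin_subst n A (mono \<alpha>)) = (\<Sum>i<n. const (A i j) * lin_subst n A (pd i (mono \<alpha>)))"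
proof (induction \<alpha> rule: exp_induct)
  case zero
  then show ?case by (simp add: mono_def)
next
  case (add_unit \<alpha> k)
  have "mono (\<alpha> + unit_exp k) = (mono \<alpha> :: 'a mpoly) * var k"
    by (simp add: var_def mono_def mult_single)
  then show ?case
    by (simp add: lin_subst_mult pd_mult add_unit pd_lin_subst_var[OF assms] lin_subst_add
        sum_distrib_left sum_distrib_right sum.distrib distrib_left ac_simps)
qed

lemma pd_lin_subst:
  assumes "j < n"
  shows "pd j (lin_subst n A g) = (\<Sum>i<n. const (A i j) * lin_subst n A (pd i g))"
proof (induction g rule: mpoly_induct)
  case (single \<alpha> c)
  have "Poly_Mapping.single \<alpha> c = const c * mono \<alpha>"
    by (simp add: mono_def const_mult_single)
  then show ?case
    by (simp add: lin_subst_const_mult pd_const_mult pd_lin_subst_mono[OF assms]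
        sum_distrib_left ac_simps)
qed (simp_all add: pd_add lin_subst_add distrib_left sum.distrib)

lemma lin_subst_subst_var_inverse:
  assumes AB: "\<forall>i<n. \<forall>l<n. (\<Sum>j<n. A i j * B j l) = (if i = l then 1 else 0)" and "i < n"
  shows "lin_subst n B (subst_var n A i) = var i"
proof -
  have "lin_subst n B (subst_var n A i) = (\<Sum>j<n. \<Sum>l<n. const (A i j * B j l) * var l)"
    by (simp add: subst_var_def lin_subst_sum lin_subst_const_mult lin_subst_var
        sum_distrib_left const_mult mult.assoc)
  also have "\<dots> = (\<Sum>l<n. const (\<Sum>j<n. A i j * B j l) * var l)"
    by (subst sum.swap) (simp add: const_sum sum_distrib_right)
  also have "\<dots> = (\<Sum>l<n. if l = i then var i else 0)"
    using AB \<open>i < n\<close> by (intro sum.cong) auto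
  finally show ?thesis
    using \<open>i < n\<close> by simp
qed

lemma prod_var_power_eq_mono:
  assumes "Poly_Mapping.keys \<alpha> \<subseteq> {..<n}"
  shows "(\<Prod>i<n. var i ^ Poly_Mapping.lookup \<alpha> i) = (mono \<alpha> :: 'k::comm_ring_1 mpoly)"
proof -
  have var_power: "(var i :: 'k mpoly) ^ k = mono (Poly_Mapping.single i k)" for i k
    by (induction k) (simp_all add: var_def mono_def mult_single flip: single_add single_one)
  have "(\<Prod>i\<in>I. mono (Poly_Mapping.single i (Poly_Mapping.lookup \<alpha> i)) :: 'k mpoly) =
      mono (\<Sum>i\<in>I. Poly_Mapping.single i (Poly_Mapping.lookup \<alpha> i))" for I
    by (induction I rule: infinite_finite_induct)
       (simp_all add: mono_def mult_single flip: single_one)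
  moreover have "(\<Sum>i<n. Poly_Mapping.single i (Poly_Mapping.lookup \<alpha> i)) = \<alpha>"
    using assms
    by (intro poly_mapping_eqI) (auto simp: lookup_sum lookup_single when_def in_keys_iff)
  ultimately show ?thesis
    by (simp add: var_power)
qed

lemma lin_subst_inverse:
  assumes AB: "\<forall>i<n. \<forall>l<n. (\<Sum>j<n. A i j * B j l) = (if i = l then 1 else 0)"
    and g: "in_vars {..<n} g"
  shows "lin_subst n B (lin_subst n A g) = g"
proof -
  have mono: "lin_subst n B (subst_mono n A \<alpha>) = mono \<alpha>" if "Poly_Mapping.keys \<alpha> \<subseteq> {..<n}" for \<alpha>
    using that
    by (simp add: subst_mono_def lin_subst_prod lin_subst_power lin_subst_subst_var_inverse[OF AB]
        prod_var_power_eq_mono)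
  have "lin_subst n B (lin_subst n A g) =
      (\<Sum>\<alpha>\<in>Poly_Mapping.keys g. const (Poly_Mapping.lookup g \<alpha>) * lin_subst n B (subst_mono n A \<alpha>))"
    by (simp add: lin_subst_eq_sum_superset[of "Poly_Mapping.keys g" g n A] lin_subst_sum
        lin_subst_const_mult)
  also have "\<dots> = (\<Sum>\<alpha>\<in>Poly_Mapping.keys g. Poly_Mapping.single \<alpha> (Poly_Mapping.lookup g \<alpha>))"
    using g by (intro sum.cong) (auto simp: in_vars_def mono mono_def const_mult_single)
  finally show ?thesis
    by (simp add: sum_single_lookup_keys)
qed

section \<open>Splitting the variables of f\<close>

lemma sum_eq_single_term:
  assumes "finite S" "a \<in> S" "\<forall>x\<in>S. x \<noteq> a \<longrightarrow> g x = 0"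
  shows "sum g S = g a"
  using assms by (simp add: sum.remove[of S a] sum.neutral)

lemma const_mult_cancel_right:
  assumes "g \<noteq> (0 :: 'k::field mpoly)" "const a * g = const b * g"
  shows "a = b"
proof -
  from assms(1) obtain \<alpha> where "Poly_Mapping.lookup g \<alpha> \<noteq> 0"
    by (metis lookup_zero poly_mapping_eqI)
  with arg_cong[OF assms(2), of "\<lambda>h. Poly_Mapping.lookup h \<alpha>"] show ?thesis
    by (simp add: lookup_const_mult)
qed

lemma pd_lin_subst_summand:
  assumes AB: "\<forall>i<n. \<forall>l<n. (\<Sum>j<n. A i j * B j l) = (if i = l then 1 else 0)"
    and f: "in_vars {..<n} f" and split: "lin_subst n A f = f1 + f2"
    and f1: "in_vars {..<a} f1" and f2: "in_vars {a..<n} f2"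
    and "a \<le> n" "j < n"
  shows "pd j (lin_subst n B f1) = (\<Sum>m<n. const (\<Sum>i<a. A m i * B i j) * pd m f)"
proof -
  have pd_f1: "lin_subst n B (pd i f1) = (\<Sum>m<n. const (A m i) * pd m f)" if "i < a" for i
  proof -
    have "pd i f1 = pd i (lin_subst n A f)"
      using split pd_eq_0_if_in_vars[OF f2, of i] that by (simp add: pd_add)
    also have "\<dots> = (\<Sum>m<n. const (A m i) * lin_subst n A (pd m f))"
      using that \<open>a \<le> n\<close> by (simp add: pd_lin_subst)
    finally show ?thesis
      using lin_subst_inverse[OF AB in_vars_pd[OF f]]
      by (simp add: lin_subst_sum lin_subst_const_mult)
  qed
  have "pd j (lin_subst n B f1) = (\<Sum>i<n. const (B i j) * lin_subst n B (pd i f1))"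
    using \<open>j < n\<close> by (rule pd_lin_subst)
  also have "\<dots> = (\<Sum>i<a. const (B i j) * lin_subst n B (pd i f1))"
    using pd_eq_0_if_in_vars[OF f1] \<open>a \<le> n\<close> by (intro sum.mono_neutral_right) auto
  also have "\<dots> = (\<Sum>i<a. \<Sum>m<n. const (A m i * B i j) * pd m f)"
    by (simp add: pd_f1 sum_distrib_left const_mult ac_simps)
  also have "\<dots> = (\<Sum>m<n. const (\<Sum>i<a. A m i * B i j) * pd m f)"
    by (subst sum.swap) (simp add: const_sum sum_distrib_right)
  finally show ?thesis .
qed

lemma state_pd_subset_if_closed:
  fixes f F :: "'k::field mpoly"
  assumes form: "is_form n d f"
    and closed: "state f = {\<alpha>. Poly_Mapping.keys \<alpha> \<subseteq> {..<n} \<and> (\<Sum>i<n. Poly_Mapping.lookup \<alpha> i) = d \<and>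
                 (\<exists>i<n. \<not> CHAR('k) dvd Poly_Mapping.lookup \<alpha> i) \<and>
                 (\<forall>i<n. state (pd i (mono \<alpha> :: 'k mpoly)) \<subseteq> (\<Union>j<n. state (pd j f)))}"
    and F: "\<forall>i<n. state (pd i F) \<subseteq> (\<Union>j<n. state (pd j f))"
    and "j < n"
  shows "state (pd j F) \<subseteq> state (pd j f)"
proof
  fix \<beta>
  assume \<beta>: "\<beta> \<in> state (pd j F)"
  define \<alpha> where "\<alpha> = \<beta> + unit_exp j"
  from \<beta> have nz: "(of_nat (Poly_Mapping.lookup \<beta> j + 1) :: 'k) \<noteq> 0"
    and F_\<alpha>: "Poly_Mapping.lookup F \<alpha> \<noteq> 0"
    by (auto simp: in_state_pd_iff \<alpha>_def)
  from F \<beta> \<open>j < n\<close> obtain m where "m < n" "\<beta> \<in> state (pd m f)"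
    by blast
  then have "\<beta> + unit_exp m \<in> Poly_Mapping.keys f"
    by (auto simp: in_state_pd_iff in_keys_iff)
  with form have "Poly_Mapping.keys (\<beta> + unit_exp m) \<subseteq> {..<n}"
    and "(\<Sum>i<n. Poly_Mapping.lookup (\<beta> + unit_exp m) i) = d"
    by (auto simp: is_form_def)
  then have keys: "Poly_Mapping.keys \<alpha> \<subseteq> {..<n}" and deg: "(\<Sum>i<n. Poly_Mapping.lookup \<alpha> i) = d"
    using keys_subset_keys_add[of \<beta> "unit_exp m"] keys_add[of \<beta> "unit_exp j"] \<open>j < n\<close> \<open>m < n\<close>
      sum_lookup_add_unit_exp[of j n \<beta>] sum_lookup_add_unit_exp[of m n \<beta>]
    by (auto simp: \<alpha>_def)
  have "Poly_Mapping.lookup \<alpha> j = Poly_Mapping.lookup \<beta> j + 1"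
    by (simp add: \<alpha>_def lookup_add)
  with nz have char: "\<not> CHAR('k) dvd Poly_Mapping.lookup \<alpha> j"
    by (metis of_nat_eq_0_iff_char_dvd)
  have mono_\<alpha>: "state (pd i (mono \<alpha> :: 'k mpoly)) \<subseteq> state (pd i F)" for i
  proof
    fix \<gamma>
    assume "\<gamma> \<in> state (pd i (mono \<alpha> :: 'k mpoly))"
    then have "(of_nat (Poly_Mapping.lookup \<gamma> i + 1) :: 'k) \<noteq> 0" and "\<alpha> = \<gamma> + unit_exp i"
      by (simp_all add: in_state_pd_iff mono_def lookup_single when_def split: if_split_asm)
    with F_\<alpha> show "\<gamma> \<in> state (pd i F)"
      by (simp add: in_state_pd_iff)
  qed
  have "\<forall>i<n. state (pd i (mono \<alpha> :: 'k mpoly)) \<subseteq> (\<Union>j<n. state (pd j f))"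
    using mono_\<alpha> F by (meson order_trans)
  then have "\<alpha> \<in> state f"
    unfolding closed using keys deg char \<open>j < n\<close> by blast
  then have "Poly_Mapping.lookup f \<alpha> \<noteq> 0"
    by (simp add: state_def in_keys_iff)
  with nz show "\<beta> \<in> state (pd j f)"
    by (simp add: in_state_pd_iff \<alpha>_def)
qed

lemma pd_combination_off_diagonal_zero:
  fixes f F :: "'k::field mpoly"
  assumes nonzero: "\<forall>i<n. state (pd i f) \<noteq> {}"
    and disjoint: "\<forall>i<n. \<forall>j<n. i \<noteq> j \<longrightarrow> state (pd i f) \<inter> state (pd j f) = {}"
    and F: "\<forall>j<n. pd j F = (\<Sum>m<n. const (P m j) * pd m f)"
    and sub: "\<forall>j<n. state (pd j F) \<subseteq> state (pd j f)"
    and "m < n" "j < n" "m \<noteq> j"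
  shows "P m j = 0"
proof (rule ccontr)
  assume "P m j \<noteq> 0"
  from nonzero \<open>m < n\<close> obtain \<gamma> where \<gamma>: "\<gamma> \<in> state (pd m f)"
    by blast
  have "Poly_Mapping.lookup (pd m' f) \<gamma> = 0" if "m' < n" "m' \<noteq> m" for m'
    using disjoint \<gamma> that \<open>m < n\<close> unfolding state_def by (metis IntI empty_iff in_keys_iff)
  then have "Poly_Mapping.lookup (pd j F) \<gamma> = P m j * Poly_Mapping.lookup (pd m f) \<gamma>"
    using F \<open>m < n\<close> \<open>j < n\<close>
    by (simp add: lookup_sum lookup_const_mult sum_eq_single_term[of _ m])
  with \<open>P m j \<noteq> 0\<close> \<gamma> have "\<gamma> \<in> state (pd j F)"
    by (simp add: state_def in_keys_iff)
  with sub disjoint \<gamma> \<open>m < n\<close> \<open>j < n\<close> \<open>m \<noteq> j\<close> show False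
    by blast
qed

lemma scalars_equal_if_hessian_graph_connected:
  fixes f F :: "'k::field mpoly"
  assumes connected: "hessian_graph_connected n f"
    and F: "\<forall>j<n. pd j F = const (c j) * pd j f"
    and "i < n" "j < n"
  shows "c i = c j"
proof -
  have edge: "c u = c v" if "u < n" "v < n" "pd u (pd v f) \<noteq> 0" for u v
  proof -
    have "const (c v) * pd u (pd v f) = const (c u) * pd u (pd v f)"
      using F that pd_commute[of u v F] pd_commute[of u v f] by (simp add: pd_const_mult)
    with that show ?thesis
      by (metis const_mult_cancel_right)
  qed
  from connected \<open>i < n\<close> \<open>j < n\<close>
  have "(i, j) \<in> {(u, v). u < n \<and> v < n \<and> pd u (pd v f) \<noteq> 0}\<^sup>*"
    by (simp add: hessian_graph_connected_def)
  then show ?thesis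
    by (induction rule: rtrancl_induct) (auto dest: edge)
qed

lemma conjugated_coordinate_projection_not_scalar:
  fixes A B :: "nat \<Rightarrow> nat \<Rightarrow> 'k::comm_ring_1"
  assumes BA: "\<forall>i<n. \<forall>l<n. (\<Sum>j<n. B i j * A j l) = (if i = l then 1 else 0)"
    and "0 < a" "a < n"
  shows "\<not> (\<forall>m<n. \<forall>j<n. (\<Sum>i<a. A m i * B i j) = (if m = j then c else 0))"
proof
  assume scalar: "\<forall>m<n. \<forall>j<n. (\<Sum>i<a. A m i * B i j) = (if m = j then c else 0)"
  \<comment> \<open>Q k is the k-th diagonal entry of B (A E_a B) A, i.e. of E_a\<close>
  define Q where "Q k = (\<Sum>m<n. \<Sum>j<n. B k m * (\<Sum>i<a. A m i * B i j) * A j k)" for k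
  have Q_scalar: "Q k = c" if "k < n" for k
  proof -
    have "Q k = (\<Sum>m<n. \<Sum>j<n. if j = m then c * (B k m * A m k) else 0)"
      unfolding Q_def using scalar by (intro sum.cong refl) auto
    also have "\<dots> = c * (\<Sum>m<n. B k m * A m k)"
      by (simp add: sum_distrib_left)
    finally show ?thesis
      using BA that by simp
  qed
  have Q_projection: "Q k = (if k < a then 1 else 0)" if "k < n" for k
  proof -
    have "Q k = (\<Sum>i<a. (\<Sum>m<n. B k m * A m i) * (\<Sum>j<n. B i j * A j k))"
      unfolding Q_def sum_product
      by (simp add: sum_distrib_left sum_distrib_right ac_simps sum.swap[of _ "{..<a}"])
    also have "\<dots> = (\<Sum>i<a. if i = k then 1 else 0)"
      using BA that \<open>a < n\<close> by (intro sum.cong refl) auto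
    finally show ?thesis
      by simp
  qed
  have "c = 1"
    using Q_scalar[of 0] Q_projection[of 0] \<open>0 < a\<close> \<open>a < n\<close> by simp
  moreover have "c = 0"
    using Q_scalar[of "n - 1"] Q_projection[of "n - 1"] \<open>a < n\<close> by simp
  ultimately show False
    by simp
qed

theorem theorem5p5:
  fixes f :: "'k::field mpoly" and n d :: nat
  assumes notF2: "card (UNIV :: 'k set) \<noteq> 2"
    and form: "is_form n d f"
    and d3: "d \<ge> 3"
    and c1: "\<forall>i<n. state (pd i f) \<noteq> {}"
    and c2: "\<forall>i<n. \<forall>j<n. i < j \<longrightarrow> state (pd i f) \<inter> state (pd j f) = {}"
    and c3: "state f = {\<alpha>. Poly_Mapping.keys \<alpha> \<subseteq> {..<n} \<and> (\<Sum>i<n. Poly_Mapping.lookup \<alpha> i) = d \<and>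
                 (\<exists>i<n. \<not> CHAR('k) dvd Poly_Mapping.lookup \<alpha> i) \<and>
                 (\<forall>i<n. state (pd i (mono \<alpha> :: 'k mpoly)) \<subseteq> (\<Union>j<n. state (pd j f)))}"
    and c4: "hessian_graph_connected n f"
  shows "\<not> direct_sum n f"
proof
  assume "direct_sum n f"
  then obtain A a f1 f2 where "invertible_mat n A" "1 \<le> a" "a \<le> n - 1"
    and f1: "in_vars {..<a} f1" and f2: "in_vars {a..<n} f2" and split: "lin_subst n A f = f1 + f2"
    unfolding direct_sum_def by blast
  then have "0 < a" "a < n"
    by linarith+
  from \<open>invertible_mat n A\<close> obtain B
    where AB: "\<forall>i<n. \<forall>l<n. (\<Sum>j<n. A i j * B j l) = (if i = l then 1 else 0)"
    and BA: "\<forall>i<n. \<forall>l<n. (\<Sum>j<n. B i j * A j l) = (if i = l then 1 else 0)"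
    unfolding invertible_mat_def by blast
  define F where "F = lin_subst n B f1"
  define P where "P m j = (\<Sum>i<a. A m i * B i j)" for m j
  have "in_vars {..<n} f"
    using form by (auto simp: is_form_def in_vars_def)
  from pd_lin_subst_summand[OF AB this split f1 f2 less_imp_le[OF \<open>a < n\<close>]]
  have pd_F: "\<forall>j<n. pd j F = (\<Sum>m<n. const (P m j) * pd m f)"
    unfolding F_def P_def by blast
  then have "\<forall>j<n. state (pd j F) \<subseteq> (\<Union>m<n. state (pd m f))"
    by (simp add: state_sum_const_mult_subset)
  then have "\<forall>j<n. state (pd j F) \<subseteq> state (pd j f)"
    using state_pd_subset_if_closed[OF form c3] by blast
  moreover have "\<forall>i<n. \<forall>j<n. i \<noteq> j \<longrightarrow> state (pd i f) \<inter> state (pd j f) = {}"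
    using c2 by (metis Int_commute linorder_neqE_nat)
  ultimately have off_diagonal: "\<forall>m<n. \<forall>j<n. m \<noteq> j \<longrightarrow> P m j = 0"
    using pd_combination_off_diagonal_zero[OF c1 _ pd_F] by blast
  with pd_F have diagonal: "\<forall>j<n. pd j F = const (P j j) * pd j f"
    by (simp add: sum_eq_single_term)
  have "P m j = (if m = j then P 0 0 else 0)" if "m < n" "j < n" for m j
    using that off_diagonal scalars_equal_if_hessian_graph_connected[OF c4 diagonal \<open>m < n\<close>, of 0]
      \<open>0 < a\<close> \<open>a < n\<close>
    by (cases "m = j") simp_all
  with conjugated_coordinate_projection_not_scalar[OF BA \<open>0 < a\<close> \<open>a < n\<close>] show False
    unfolding P_def by blast
qed

end
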